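(* Let $G$ be a connected bipartite graph with at least two vertices. A vertex $v\in V(G)$ is an $\mathcal{L}$-branch leaf of some BFS ordering of $G$ if and only if there is a vertex $r\in V(G)\setminus\{v\}$ such that $\mathrm{dist}_G(r,w)=\mathrm{dist}_{G-v}(r,w)$ for all $w\in V(G)\setminus\{v\}$.
   Context: Graphs are finite, simple, undirected; $\mathrm{dist}_H(a,b)$ is the number of edges of a shortest $a$-$b$ path in $H$. A vertex ordering of $G$ is a bijection $\sigma:\{1,\dots,n\}\to V(G)$; $u\prec_\sigma w$ means $u$ comes before $w$. BFS orderings are produced by the label search: initially all labels are $\emptyset$; for $i=1,\dots,n$ choose any unnumbered vertex $x$ such that there is no unnumbered $y$ with $\mathrm{label}(x)\prec\mathrm{label}(y)$, set $\sigma(i)=x$, and add $i$ to the labels of the unnumbered neighbors of $x$, where $A\prec B$ iff ($A=\emptyset$ and $B\neq\emptyset$) or $\min(A)>\min(B)$. The $\mathcal{L}$-tree of $\sigma$ is the spanning tree containing, for each $v\neq\sigma(1)$, the edge from $v$ to its rightmost neighbor $w$ with $w\prec_\sigma v$. A vertex $v\neq\sigma(1)$ that is a leaf of the $\mathcal{L}$-tree is an $\mathcal{L}$-branch leaf of $\sigma$. *)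

theory Defs
  imports Main "HOL-Library.Extended_Nat"
begin

definition graph :: "'a set \<Rightarrow> ('a \<Rightarrow> 'a \<Rightarrow> bool) \<Rightarrow> bool" where
  "graph V E \<longleftrightarrow> finite V \<and> (\<forall>x y. E x y \<longrightarrow> x \<in> V \<and> y \<in> V)
     \<and> (\<forall>x y. E x y \<longrightarrow> E y x) \<and> (\<forall>x. \<not> E x x)"

definition walk :: "'a set \<Rightarrow> ('a \<Rightarrow> 'a \<Rightarrow> bool) \<Rightarrow> 'a list \<Rightarrow> bool" where
  "walk V E p \<longleftrightarrow> p \<noteq> [] \<and> set p \<subseteq> V \<and> (\<forall>i. Suc i < length p \<longrightarrow> E (p ! i) (p ! Suc i))"

definition gdist :: "'a set \<Rightarrow> ('a \<Rightarrow> 'a \<Rightarrow> bool) \<Rightarrow> 'a \<Rightarrow> 'a \<Rightarrow> enat" where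
  "gdist V E a b = (INF p \<in> {p. walk V E p \<and> hd p = a \<and> last p = b}. enat (length p - 1))"

definition connected_graph :: "'a set \<Rightarrow> ('a \<Rightarrow> 'a \<Rightarrow> bool) \<Rightarrow> bool" where
  "connected_graph V E \<longleftrightarrow> (\<forall>u\<in>V. \<forall>w\<in>V. \<exists>p. walk V E p \<and> hd p = u \<and> last p = w)"

definition bipartite :: "'a set \<Rightarrow> ('a \<Rightarrow> 'a \<Rightarrow> bool) \<Rightarrow> bool" where
  "bipartite V E \<longleftrightarrow> (\<exists>A. \<forall>u w. E u w \<longrightarrow> (u \<in> A \<longleftrightarrow> w \<notin> A))"

definition del_vertex :: "'a set \<Rightarrow> ('a \<Rightarrow> 'a \<Rightarrow> bool) \<Rightarrow> 'a \<Rightarrow> 'a set \<times> ('a \<Rightarrow> 'a \<Rightarrow> bool)" where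
  "del_vertex V E v = (V - {v}, \<lambda>x y. E x y \<and> x \<noteq> v \<and> y \<noteq> v)"

definition label_less :: "nat set \<Rightarrow> nat set \<Rightarrow> bool" where
  "label_less A B \<longleftrightarrow> (A = {} \<and> B \<noteq> {}) \<or> (A \<noteq> {} \<and> B \<noteq> {} \<and> Min A > Min B)"

text \<open>Vertex orderings are lists (position i, 0-based, corresponds to sigma(i+1)).
  The label of x just before step i is the set of positions j < i of already
  numbered neighbours of x.\<close>
definition label :: "'a list \<Rightarrow> ('a \<Rightarrow> 'a \<Rightarrow> bool) \<Rightarrow> nat \<Rightarrow> 'a \<Rightarrow> nat set" where
  "label \<sigma> E i x = {j. j < i \<and> E (\<sigma> ! j) x}"

definition bfs_ordering :: "'a set \<Rightarrow> ('a \<Rightarrow> 'a \<Rightarrow> bool) \<Rightarrow> 'a list \<Rightarrow> bool" where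
  "bfs_ordering V E \<sigma> \<longleftrightarrow> distinct \<sigma> \<and> set \<sigma> = V \<and>
     (\<forall>i k. i < k \<and> k < length \<sigma> \<longrightarrow>
        \<not> label_less (label \<sigma> E i (\<sigma> ! i)) (label \<sigma> E i (\<sigma> ! k)))"

definition precedes :: "'a list \<Rightarrow> 'a \<Rightarrow> 'a \<Rightarrow> bool" where
  "precedes \<sigma> u w \<longleftrightarrow> (\<exists>i j. i < j \<and> j < length \<sigma> \<and> \<sigma> ! i = u \<and> \<sigma> ! j = w)"

definition rightmost_left_nb :: "'a list \<Rightarrow> ('a \<Rightarrow> 'a \<Rightarrow> bool) \<Rightarrow> 'a \<Rightarrow> 'a \<Rightarrow> bool" where
  "rightmost_left_nb \<sigma> E v w \<longleftrightarrow> E w v \<and> precedes \<sigma> w v \<and>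
     (\<forall>w'. E w' v \<and> precedes \<sigma> w' v \<longrightarrow> w' = w \<or> precedes \<sigma> w' w)"

definition L_tree_edges :: "'a list \<Rightarrow> ('a \<Rightarrow> 'a \<Rightarrow> bool) \<Rightarrow> 'a set set" where
  "L_tree_edges \<sigma> E = {{w, v} | v w. v \<in> set \<sigma> \<and> v \<noteq> hd \<sigma> \<and> rightmost_left_nb \<sigma> E v w}"

definition L_branch_leaf :: "'a list \<Rightarrow> ('a \<Rightarrow> 'a \<Rightarrow> bool) \<Rightarrow> 'a \<Rightarrow> bool" where
  "L_branch_leaf \<sigma> E v \<longleftrightarrow> v \<in> set \<sigma> \<and> v \<noteq> hd \<sigma> \<and> card {e \<in> L_tree_edges \<sigma> E. v \<in> e} = 1"

end

theory Submission
  imports Defs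
begin

(* Let r be the first vertex of a BFS ordering of a bipartite graph. The rightmost earlier
   neighbour of a vertex lies one level closer to r (levels are non-decreasing along the
   ordering, and adjacent vertices lie on different levels), so the L-tree paths from r are
   shortest paths. If v is an L-branch leaf, these paths avoid v, hence G - v has the same
   distances from r.

   Conversely, given such an r, run BFS from r breaking ties in favour of the vertices of a
   fixed shortest r-v path; each of them is then the first vertex of its level, in particular
   v is the first vertex of level K = dist(r, v). An L-tree child w of v lies on level K + 1,
   and by hypothesis some shortest r-w path avoids v. Its penultimate vertex lies on level K,
   so it comes after v and before w: v is not the rightmost earlier neighbour of w. *)

section \<open>Walks and distances\<close>

lemma walk_snoc:
  assumes "walk V E p" "E (last p) y" "y \<in> V"
  shows "walk V E (p @ [y])"
  using assms
  by (auto simp: walk_def nth_append last_conv_nth less_Suc_eq) (metis One_nat_def diff_Suc_1)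

lemma walk_singleton: "a \<in> V \<Longrightarrow> walk V E [a]"
  by (simp add: walk_def)

lemma walk_del_vertex_iff:
  "walk (fst (del_vertex V E v)) (snd (del_vertex V E v)) p \<longleftrightarrow> walk V E p \<and> v \<notin> set p"
  by (auto simp: walk_def del_vertex_def)

lemma list_exit_index:
  assumes "hd p \<in> S" "last p \<notin> S" "p \<noteq> []"
  shows "\<exists>i. Suc i < length p \<and> p ! i \<in> S \<and> p ! Suc i \<notin> S"
  using assms
proof (induction p)
  case (Cons a p)
  show ?case
  proof (cases "p \<noteq> [] \<and> hd p \<in> S")
    case True
    with Cons obtain i where "Suc i < length p" "p ! i \<in> S" "p ! Suc i \<notin> S" by auto
    then show ?thesis by (intro exI[of _ "Suc i"]) auto
  next
    case False
    with Cons.prems show ?thesis by (intro exI[of _ 0]) (cases p; auto)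
  qed
qed simp

lemma gdist_le_walk:
  "walk V E p \<Longrightarrow> hd p = a \<Longrightarrow> last p = b \<Longrightarrow> gdist V E a b \<le> enat (length p - 1)"
  unfolding gdist_def by (intro INF_lower) auto

lemma gdist_enat_walk:
  assumes "gdist V E a b = enat n"
  obtains p where "walk V E p" "hd p = a" "last p = b" "length p = Suc n"
proof -
  let ?W = "{p. walk V E p \<and> hd p = a \<and> last p = b}"
  have "?W \<noteq> {}"
  proof
    assume no_walk: "?W = {}"
    have "gdist V E a b = \<infinity>" unfolding gdist_def no_walk by (simp add: top_enat_def)
    then show False using assms by simp
  qed
  then have "gdist V E a b \<in> (\<lambda>p. enat (length p - 1)) ` ?W"
    unfolding gdist_def Inf_enat_def by (simp add: LeastI_ex[of "\<lambda>x. x \<in> _"] ex_in_conv) blast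
  then obtain p where "p \<in> ?W" "enat (length p - 1) = enat n"
    using assms by auto
  moreover have "p \<noteq> []" using \<open>p \<in> ?W\<close> by (simp add: walk_def)
  ultimately show thesis using that by auto
qed

lemma gdist_mono_subgraph:
  assumes "\<And>p. walk V' E' p \<Longrightarrow> walk V E p"
  shows "gdist V E a b \<le> gdist V' E' a b"
  unfolding gdist_def using assms by (intro INF_superset_mono) auto

(* Only meaningful when b is reachable from a: the_enat of infinity is unspecified. *)
definition graph_dist :: "'a set \<Rightarrow> ('a \<Rightarrow> 'a \<Rightarrow> bool) \<Rightarrow> 'a \<Rightarrow> 'a \<Rightarrow> nat" where
  "graph_dist V E a b = the_enat (gdist V E a b)"

section \<open>BFS orderings with preferred vertices\<close>

definition label_key :: "nat set \<Rightarrow> enat" where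
  "label_key A = (if A = {} then \<infinity> else enat (Min A))"

lemma finite_label [simp]: "finite (label \<sigma> E i x)"
  unfolding label_def by simp

lemma label_less_iff_key: "label_less (label \<sigma> E i x) (label \<sigma> E i y) \<longleftrightarrow>
    label_key (label \<sigma> E i y) < label_key (label \<sigma> E i x)"
  unfolding label_less_def label_key_def by auto

lemma label_take: "label (take i xs) E i x = label xs E i x"
  unfolding label_def by auto

(* Ties are broken in favour of P: if x is not in P, no vertex of P is an admissible choice.
   The first vertex is exempt; it is fixed separately. *)
definition preferred_bfs_step :: "'a set \<Rightarrow> ('a \<Rightarrow> 'a \<Rightarrow> bool) \<Rightarrow> 'a set \<Rightarrow> 'a list \<Rightarrow> 'a \<Rightarrow> bool" where
  "preferred_bfs_step V E P xs x \<longleftrightarrow> x \<in> V - set xs \<and>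
     (\<forall>y \<in> V - set xs. label_key (label xs E (length xs) x) \<le> label_key (label xs E (length xs) y) \<and>
        (xs \<noteq> [] \<longrightarrow> x \<notin> P \<longrightarrow> y \<in> P \<longrightarrow>
           label_key (label xs E (length xs) x) < label_key (label xs E (length xs) y)))"

inductive preferred_bfs_prefix :: "'a set \<Rightarrow> ('a \<Rightarrow> 'a \<Rightarrow> bool) \<Rightarrow> 'a \<Rightarrow> 'a set \<Rightarrow> 'a list \<Rightarrow> bool"
  for V E r P where
  Nil: "preferred_bfs_prefix V E r P []"
| snoc: "preferred_bfs_prefix V E r P xs \<Longrightarrow> (xs = [] \<longrightarrow> x = r) \<Longrightarrow> preferred_bfs_step V E P xs x \<Longrightarrow>
    preferred_bfs_prefix V E r P (xs @ [x])"

lemma preferred_bfs_step_exists: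
  assumes "finite V" "r \<in> V" "V - set xs \<noteq> {}"
  obtains x where "preferred_bfs_step V E P xs x" "xs = [] \<longrightarrow> x = r"
proof (cases "xs = []")
  case True
  have "preferred_bfs_step V E P [] r"
    using assms(2) by (simp add: preferred_bfs_step_def label_def)
  then show thesis
    using that True by blast
next
  case False
  let ?R = "V - set xs" and ?key = "\<lambda>y. label_key (label xs E (length xs) y)"
  define M where "M = {x \<in> ?R. \<forall>y \<in> ?R. ?key x \<le> ?key y}"
  have "finite ?R"
    using assms(1) by simp
  then have "arg_min_on ?key ?R \<in> M"
    unfolding M_def using arg_min_if_finite(1) arg_min_least[where f = ?key] assms(3) by auto
  then obtain x where x: "x \<in> M" "M \<inter> P \<noteq> {} \<Longrightarrow> x \<in> P"
    by (cases "M \<inter> P = {}") auto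
  have "?key x < ?key y" if y: "x \<notin> P" "y \<in> P" "y \<in> ?R" for y
  proof -
    have "y \<notin> M"
      using x y by blast
    then obtain z where z: "z \<in> ?R" "?key z < ?key y"
      using y(3) unfolding M_def by (auto simp: not_le)
    then have "?key x \<le> ?key z"
      using x(1) unfolding M_def by blast
    then show ?thesis
      using z(2) by (rule le_less_trans)
  qed
  moreover have "x \<in> ?R" "\<forall>y \<in> ?R. ?key x \<le> ?key y"
    using x(1) unfolding M_def by auto
  ultimately have "preferred_bfs_step V E P xs x"
    unfolding preferred_bfs_step_def by auto
  then show thesis
    using that False by blast
qed

lemma preferred_bfs_prefix_nth:
  "preferred_bfs_prefix V E r P xs \<Longrightarrow> i < length xs \<Longrightarrow>
    preferred_bfs_step V E P (take i xs) (xs ! i)"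
  by (induction rule: preferred_bfs_prefix.induct) (auto simp: nth_append less_Suc_eq)

lemma preferred_bfs_prefixD:
  assumes "preferred_bfs_prefix V E r P xs"
  shows "distinct xs" "set xs \<subseteq> V" "xs \<noteq> [] \<Longrightarrow> xs ! 0 = r"
  using assms by (induction rule: preferred_bfs_prefix.induct)
    (auto simp: preferred_bfs_step_def nth_append)

lemma preferred_bfs_prefix_exists:
  assumes "finite V" "r \<in> V" "n \<le> card V"
  shows "\<exists>xs. length xs = n \<and> preferred_bfs_prefix V E r P xs"
  using assms(3)
proof (induction n)
  case 0
  show ?case
    using preferred_bfs_prefix.Nil by (intro exI[of _ "[]"]) simp
next
  case (Suc n)
  then obtain xs where xs: "length xs = n" "preferred_bfs_prefix V E r P xs"
    by auto
  then have "card (set xs) < card V"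
    using Suc.prems distinct_card[OF preferred_bfs_prefixD(1)[OF xs(2)]] by simp
  then have "V - set xs \<noteq> {}"
    using preferred_bfs_prefixD(2)[OF xs(2)] by auto
  then obtain x where "preferred_bfs_step V E P xs x" "xs = [] \<longrightarrow> x = r"
    by (rule preferred_bfs_step_exists[OF assms(1,2)])
  then show ?case
    using preferred_bfs_prefix.snoc[OF xs(2)] xs(1) by (metis length_append_singleton)
qed

lemma preferred_bfs_ordering_exists:
  assumes "finite V" "r \<in> V"
  obtains \<sigma> where "bfs_ordering V E \<sigma>" "\<sigma> ! 0 = r"
    "\<And>i x. 0 < i \<Longrightarrow> i < length \<sigma> \<Longrightarrow> \<sigma> ! i \<notin> P \<Longrightarrow> x \<in> P \<Longrightarrow> x \<in> V - set (take i \<sigma>) \<Longrightarrow>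
       label_less (label \<sigma> E i x) (label \<sigma> E i (\<sigma> ! i))"
proof -
  obtain \<sigma> where \<sigma>: "length \<sigma> = card V" "preferred_bfs_prefix V E r P \<sigma>"
    using preferred_bfs_prefix_exists[OF assms order_refl] by blast
  note props = preferred_bfs_prefixD[OF \<sigma>(2)]
  have "set \<sigma> = V"
    using props(1,2) \<sigma>(1) assms(1) by (metis card_subset_eq distinct_card)
  have step: "preferred_bfs_step V E P (take i \<sigma>) (\<sigma> ! i)" if "i < length \<sigma>" for i
    using preferred_bfs_prefix_nth[OF \<sigma>(2) that] .
  have later: "\<sigma> ! k \<in> V - set (take i \<sigma>)" if "i < k" "k < length \<sigma>" for i k
    using props(1) that \<open>set \<sigma> = V\<close> by (auto simp: in_set_conv_nth nth_eq_iff_index_eq)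
  have "bfs_ordering V E \<sigma>"
    unfolding bfs_ordering_def
  proof (intro conjI allI impI)
    fix i k assume "i < k \<and> k < length \<sigma>"
    then show "\<not> label_less (label \<sigma> E i (\<sigma> ! i)) (label \<sigma> E i (\<sigma> ! k))"
      using step[of i] later[of i k]
      by (auto simp: preferred_bfs_step_def label_take label_less_iff_key not_less)
  qed (use props \<open>set \<sigma> = V\<close> in auto)
  moreover have "0 < card V"
    using assms card_gt_0_iff by blast
  then have "\<sigma> \<noteq> []"
    using \<sigma>(1) by auto
  then have "\<sigma> ! 0 = r"
    by (rule props(3))
  moreover have "label_less (label \<sigma> E i x) (label \<sigma> E i (\<sigma> ! i))"
    if "0 < i" "i < length \<sigma>" "\<sigma> ! i \<notin> P" "x \<in> P" "x \<in> V - set (take i \<sigma>)" for i x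
    using step[of i] that by (auto simp: preferred_bfs_step_def label_take label_less_iff_key)
  ultimately show thesis
    using that by blast
qed

lemma preferred_choice:
  assumes prefers: "\<And>x. \<sigma> ! t \<notin> P \<Longrightarrow> x \<in> P \<Longrightarrow> x \<in> V - set (take t \<sigma>) \<Longrightarrow>
      label_less (label \<sigma> E t x) (label \<sigma> E t (\<sigma> ! t))"
    and y: "s < t" "E (\<sigma> ! s) y" "y \<in> P" "y \<in> V - set (take t \<sigma>)"
    and late: "\<forall>a \<in> label \<sigma> E t (\<sigma> ! t). s \<le> a"
  shows "\<sigma> ! t \<in> P"
proof (rule ccontr)
  assume "\<sigma> ! t \<notin> P"
  then have "label_key (label \<sigma> E t (\<sigma> ! t)) < label_key (label \<sigma> E t y)"
    using prefers y(3,4) by (simp add: label_less_iff_key)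
  also have "\<dots> \<le> enat s"
  proof -
    have "s \<in> label \<sigma> E t y"
      using y(1,2) unfolding label_def by simp
    then show ?thesis
      unfolding label_key_def by auto
  qed
  also have "enat s \<le> label_key (label \<sigma> E t (\<sigma> ! t))"
    using late unfolding label_key_def by simp
  finally show False
    by simp
qed

section \<open>Distances in a connected graph\<close>

locale finite_connected_graph =
  fixes V :: "'a set" and E :: "'a \<Rightarrow> 'a \<Rightarrow> bool"
  assumes graph: "graph V E" and connected: "connected_graph V E"
begin

abbreviation d :: "'a \<Rightarrow> 'a \<Rightarrow> nat" where
  "d \<equiv> graph_dist V E"

lemma finite_vertices: "finite V"
  and edge_vertices: "E x y \<Longrightarrow> x \<in> V" "E x y \<Longrightarrow> y \<in> V"
  and edge_irrefl: "\<not> E x x"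
  using graph unfolding graph_def by blast+

lemma gdist_eq_dist:
  assumes "a \<in> V" "b \<in> V"
  shows "gdist V E a b = enat (d a b)"
proof -
  obtain p where "walk V E p" "hd p = a" "last p = b"
    using connected assms unfolding connected_graph_def by blast
  then have "gdist V E a b \<le> enat (length p - 1)"
    by (rule gdist_le_walk)
  then show ?thesis
    unfolding graph_dist_def by (cases "gdist V E a b") auto
qed

lemma shortest_walk_exists:
  assumes "a \<in> V" "b \<in> V"
  obtains p where "walk V E p" "hd p = a" "last p = b" "length p = Suc (d a b)"
  using gdist_enat_walk[OF gdist_eq_dist[OF assms]] by blast

lemma dist_le_walk:
  assumes "walk V E p" "hd p = a" "last p = b"
  shows "d a b \<le> length p - 1"
proof -
  have "a \<in> V" "b \<in> V"
    using assms by (auto simp: walk_def)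
  then show ?thesis
    using gdist_le_walk[OF assms] by (simp add: gdist_eq_dist)
qed

lemma dist_self: "a \<in> V \<Longrightarrow> d a a = 0"
  using dist_le_walk[OF walk_singleton] by fastforce

lemma dist_eq_0_iff:
  assumes "a \<in> V" "b \<in> V"
  shows "d a b = 0 \<longleftrightarrow> a = b"
proof
  assume "d a b = 0"
  then obtain p where "hd p = a" "last p = b" "length p = 1"
    using shortest_walk_exists[OF assms] by (metis One_nat_def)
  then show "a = b" by (cases p) auto
qed (use assms dist_self in simp)

lemma dist_edge:
  assumes "a \<in> V" "E x y"
  shows "d a y \<le> d a x + 1"
proof -
  obtain p where p: "walk V E p" "hd p = a" "last p = x" "length p = Suc (d a x)"
    using shortest_walk_exists assms edge_vertices by blast
  then have "walk V E (p @ [y])"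
    using assms edge_vertices by (intro walk_snoc) auto
  moreover have "hd (p @ [y]) = a"
    using p by (cases p) auto
  ultimately show ?thesis
    using dist_le_walk p(4) by fastforce
qed

lemma dist_along_walk:
  assumes "a \<in> V" "walk V E p" "i \<le> j" "j < length p"
  shows "d a (p ! j) \<le> d a (p ! i) + (j - i)"
  using assms(3,4)
proof (induction j)
  case (Suc j)
  show ?case
  proof (cases "i = Suc j")
    case False
    then have "d a (p ! j) \<le> d a (p ! i) + (j - i)"
      using Suc by simp
    moreover have "E (p ! j) (p ! Suc j)"
      using assms(2) Suc.prems unfolding walk_def by blast
    ultimately show ?thesis
      using dist_edge[OF assms(1)] False Suc.prems by fastforce
  qed simp
qed simp

lemma shortest_walk_nth_dist:
  assumes "walk V E p" "hd p = a" "length p = Suc (d a (last p))" "j < length p"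
  shows "d a (p ! j) = j"
proof -
  have p: "p \<noteq> []" "p ! 0 = a" "a \<in> V"
    using assms by (auto simp: walk_def hd_conv_nth)
  have "d a (p ! j) \<le> j"
    using dist_along_walk[OF p(3) assms(1), of 0 j] assms(4) p dist_self by simp
  moreover have "d a (last p) \<le> d a (p ! j) + (length p - 1 - j)"
    using dist_along_walk[OF p(3) assms(1), of j "length p - 1"] assms(4) p
    by (simp add: last_conv_nth)
  ultimately show ?thesis
    using assms(3,4) by linarith
qed

lemma shortest_walk_penultimate:
  assumes "walk V E p" "hd p = a" "last p = b" "length p = Suc (d a b)" "b \<noteq> a"
  shows "E (p ! (d a b - 1)) b" "d a (p ! (d a b - 1)) + 1 = d a b" "p ! (d a b - 1) \<in> set p"
proof -
  let ?k = "d a b"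
  have "a \<in> V" "b \<in> V"
    using assms(1-3) by (auto simp: walk_def)
  then have "0 < ?k"
    using dist_eq_0_iff assms(5) by auto
  moreover have "\<forall>i. Suc i < length p \<longrightarrow> E (p ! i) (p ! Suc i)"
    using assms(1) unfolding walk_def by blast
  ultimately show "E (p ! (?k - 1)) b"
    using assms(1,3,4) by (auto simp: last_conv_nth walk_def dest: spec[of _ "?k - 1"])
  show "d a (p ! (?k - 1)) + 1 = ?k"
    using shortest_walk_nth_dist assms \<open>0 < ?k\<close> by auto
  show "p ! (?k - 1) \<in> set p"
    using assms(4) by simp
qed

lemma dist_predecessor:
  assumes "a \<in> V" "b \<in> V" "b \<noteq> a"
  obtains y where "E y b" "d a y + 1 = d a b"
proof -
  obtain p where "walk V E p" "hd p = a" "last p = b" "length p = Suc (d a b)"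
    using shortest_walk_exists assms by blast
  then show thesis
    using shortest_walk_penultimate that assms(3) by blast
qed

lemma dist_predecessor_avoiding:
  assumes "a \<in> V" "b \<in> V" "b \<noteq> a"
    and "gdist V E a b = gdist (fst (del_vertex V E v)) (snd (del_vertex V E v)) a b"
  obtains y where "E y b" "y \<noteq> v" "d a y + 1 = d a b"
proof -
  have "gdist (fst (del_vertex V E v)) (snd (del_vertex V E v)) a b = enat (d a b)"
    using assms gdist_eq_dist by simp
  then obtain p where "walk (fst (del_vertex V E v)) (snd (del_vertex V E v)) p"
    and p: "hd p = a" "last p = b" "length p = Suc (d a b)"
    by (rule gdist_enat_walk)
  then have "walk V E p" "v \<notin> set p"
    by (simp_all add: walk_del_vertex_iff)
  then show thesis
    using shortest_walk_penultimate[OF _ p assms(3)] that by metis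
qed

lemma gdist_del_vertex_eq_if_shortest_walk_avoids:
  assumes "walk V E p" "hd p = a" "last p = b" "v \<notin> set p" "length p = Suc (d a b)"
  shows "gdist V E a b = gdist (fst (del_vertex V E v)) (snd (del_vertex V E v)) a b"
proof (rule antisym)
  show "gdist V E a b \<le> gdist (fst (del_vertex V E v)) (snd (del_vertex V E v)) a b"
    by (rule gdist_mono_subgraph) (simp add: walk_del_vertex_iff)
  have "a \<in> V" "b \<in> V"
    using assms(1-3) by (auto simp: walk_def)
  then show "gdist (fst (del_vertex V E v)) (snd (del_vertex V E v)) a b \<le> gdist V E a b"
    using gdist_le_walk[of _ _ p a b] assms by (simp add: walk_del_vertex_iff gdist_eq_dist)
qed

lemma bipartite_dist_edge_ne:
  assumes "bipartite V E" "a \<in> V" "E x y"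
  shows "d a x \<noteq> d a y"
proof -
  obtain A where A: "\<And>u w. E u w \<Longrightarrow> u \<in> A \<longleftrightarrow> w \<notin> A"
    using assms(1) unfolding bipartite_def by blast
  have side: "even (d a b) \<longleftrightarrow> (b \<in> A \<longleftrightarrow> a \<in> A)" if "b \<in> V" "d a b = n" for b n
    using that
  proof (induction n arbitrary: b)
    case 0
    then have "b = a" using dist_eq_0_iff assms(2) by blast
    then show ?case using 0 by simp
  next
    case (Suc n)
    then obtain y where "E y b" "d a y + 1 = d a b"
      using dist_predecessor assms(2) by (metis dist_self nat.distinct(1))
    with Suc.IH[of y] Suc.prems A show ?case
      using edge_vertices by fastforce
  qed
  show ?thesis
    using side[OF edge_vertices(1)] side[OF edge_vertices(2)] A assms(3) by fastforce
qed

end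

section \<open>Levels along a BFS ordering\<close>

locale bfs_ordered_graph = finite_connected_graph +
  fixes \<sigma> :: "'a list"
  assumes bfs: "bfs_ordering V E \<sigma>" and nonempty: "V \<noteq> {}"
begin

abbreviation level :: "'a \<Rightarrow> nat" where
  "level \<equiv> d (\<sigma> ! 0)"

lemma distinct_order: "distinct \<sigma>"
  and set_order: "set \<sigma> = V"
  using bfs unfolding bfs_ordering_def by auto

lemma bfs_choice:
  "i < k \<Longrightarrow> k < length \<sigma> \<Longrightarrow> label_key (label \<sigma> E i (\<sigma> ! i)) \<le> label_key (label \<sigma> E i (\<sigma> ! k))"
  using bfs unfolding bfs_ordering_def label_less_iff_key by (meson not_le)

lemma length_pos: "0 < length \<sigma>"
  using set_order nonempty by auto

lemma hd_order: "hd \<sigma> = \<sigma> ! 0"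
  using length_pos by (simp add: hd_conv_nth)

lemma nth_in_vertices: "i < length \<sigma> \<Longrightarrow> \<sigma> ! i \<in> V"
  using set_order by auto

lemma root_in_vertices: "\<sigma> ! 0 \<in> V"
  using nth_in_vertices length_pos by simp

lemma vertex_index:
  assumes "x \<in> V"
  obtains i where "i < length \<sigma>" "\<sigma> ! i = x"
  using assms set_order by (metis in_set_conv_nth)

lemma nth_eq_iff: "i < length \<sigma> \<Longrightarrow> j < length \<sigma> \<Longrightarrow> \<sigma> ! i = \<sigma> ! j \<longleftrightarrow> i = j"
  using distinct_order by (simp add: nth_eq_iff_index_eq)

lemma precedes_nth_iff:
  assumes "i < length \<sigma>" "j < length \<sigma>"
  shows "precedes \<sigma> (\<sigma> ! i) (\<sigma> ! j) \<longleftrightarrow> i < j"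
proof
  assume "precedes \<sigma> (\<sigma> ! i) (\<sigma> ! j)"
  then obtain i' j' where "i' < j'" "j' < length \<sigma>" "\<sigma> ! i' = \<sigma> ! i" "\<sigma> ! j' = \<sigma> ! j"
    unfolding precedes_def by blast
  then show "i < j"
    using nth_eq_iff[of i' i] nth_eq_iff[of j' j] assms by simp
qed (use assms in \<open>auto simp: precedes_def\<close>)

lemma precedesE:
  assumes "precedes \<sigma> x y"
  obtains i j where "i < j" "j < length \<sigma>" "\<sigma> ! i = x" "\<sigma> ! j = y"
  using assms unfolding precedes_def by blast

lemma precedes_asym: "precedes \<sigma> x y \<Longrightarrow> \<not> precedes \<sigma> y x"
  by (elim precedesE) (auto simp: precedes_nth_iff)

lemma precedes_not_hd: "precedes \<sigma> x y \<Longrightarrow> y \<in> set \<sigma> \<and> y \<noteq> hd \<sigma>"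
  by (metis precedesE hd_order nth_mem nth_eq_iff length_pos not_less0)

lemma nth_in_take_iff: "i < length \<sigma> \<Longrightarrow> \<sigma> ! i \<in> set (take t \<sigma>) \<longleftrightarrow> i < t"
  using distinct_order by (auto simp: in_set_conv_nth nth_eq_iff_index_eq)

lemma label_nonempty:
  assumes "0 < k" "k < length \<sigma>"
  shows "label \<sigma> E k (\<sigma> ! k) \<noteq> {}"
proof
  assume empty: "label \<sigma> E k (\<sigma> ! k) = {}"
  let ?S = "set (take k \<sigma>)"
  obtain p where p: "walk V E p" "hd p = \<sigma> ! 0" "last p = \<sigma> ! k"
    using connected nth_in_vertices assms length_pos unfolding connected_graph_def by blast
  have "hd p \<in> ?S" "last p \<notin> ?S" "p \<noteq> []"
    using p assms length_pos nth_in_take_iff by (auto simp: walk_def)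
  then obtain i where i: "Suc i < length p" "p ! i \<in> ?S" "p ! Suc i \<notin> ?S"
    using list_exit_index by blast
  have edge: "E (p ! i) (p ! Suc i)"
    using p(1) i(1) unfolding walk_def by blast
  obtain j where j: "j < k" "\<sigma> ! j = p ! i"
    using i(2) by (auto simp: in_set_conv_nth)
  obtain k' where k': "k' < length \<sigma>" "\<sigma> ! k' = p ! Suc i"
    using vertex_index edge_vertices(2)[OF edge] by blast
  have "k \<le> k'"
    using i(3) k' nth_in_take_iff by fastforce
  moreover have "k' \<noteq> k"
    using empty j edge k' unfolding label_def by auto
  moreover have "j \<in> label \<sigma> E k (\<sigma> ! k')"
    using j edge k' unfolding label_def by auto
  then have "label_key (label \<sigma> E k (\<sigma> ! k')) < \<infinity>"
    by (auto simp: label_key_def)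
  ultimately show False
    using bfs_choice[of k k'] k' empty by (simp add: label_key_def)
qed

definition bfs_parent :: "nat \<Rightarrow> nat" where
  "bfs_parent k = Min (label \<sigma> E k (\<sigma> ! k))"

lemma bfs_parent:
  assumes "0 < k" "k < length \<sigma>"
  shows "bfs_parent k < k" "E (\<sigma> ! bfs_parent k) (\<sigma> ! k)"
    and "\<And>j. j < k \<Longrightarrow> E (\<sigma> ! j) (\<sigma> ! k) \<Longrightarrow> bfs_parent k \<le> j"
proof -
  have "bfs_parent k \<in> label \<sigma> E k (\<sigma> ! k)"
    unfolding bfs_parent_def using label_nonempty[OF assms] by simp
  then show "bfs_parent k < k" "E (\<sigma> ! bfs_parent k) (\<sigma> ! k)"
    unfolding label_def by auto
  show "\<And>j. j < k \<Longrightarrow> E (\<sigma> ! j) (\<sigma> ! k) \<Longrightarrow> bfs_parent k \<le> j"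
    unfolding bfs_parent_def by (simp add: label_def)
qed

lemma bfs_parent_mono:
  assumes "0 < i" "i < k" "k < length \<sigma>"
  shows "bfs_parent i \<le> bfs_parent k"
proof (rule ccontr)
  assume less: "\<not> bfs_parent i \<le> bfs_parent k"
  then have "bfs_parent k < i"
    using bfs_parent(1)[of i] assms by simp
  then have "label_key (label \<sigma> E i (\<sigma> ! k)) \<le> enat (bfs_parent k)"
    using bfs_parent(2)[of k] assms by (auto simp: label_key_def label_def)
  also have "\<dots> < enat (bfs_parent i)"
    using less by simp
  also have "\<dots> = label_key (label \<sigma> E i (\<sigma> ! i))"
    using label_nonempty[of i] assms by (simp add: label_key_def bfs_parent_def)
  finally show False
    using bfs_choice[of i k] assms by simp
qed

lemma level_le_earlier_nb:
  assumes "0 < i" "i < k" "k < length \<sigma>" "q < k" "E (\<sigma> ! q) (\<sigma> ! k)"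
    and below: "\<forall>j<q. level (\<sigma> ! j) \<le> level (\<sigma> ! q)"
  shows "level (\<sigma> ! i) \<le> level (\<sigma> ! q) + 1"
proof -
  have "bfs_parent i \<le> q"
    using bfs_parent(3)[of k q] bfs_parent_mono[of i k] assms by fastforce
  then have "level (\<sigma> ! bfs_parent i) \<le> level (\<sigma> ! q)"
    using below by (cases "bfs_parent i = q") auto
  moreover have "level (\<sigma> ! i) \<le> level (\<sigma> ! bfs_parent i) + 1"
    using dist_edge[OF root_in_vertices bfs_parent(2)] assms by simp
  ultimately show ?thesis
    by simp
qed

lemma level_mono:
  assumes "i \<le> k" "k < length \<sigma>"
  shows "level (\<sigma> ! i) \<le> level (\<sigma> ! k)"
proof -
  have strict: "level (\<sigma> ! i) \<le> m" if "i < k" "k < length \<sigma>" "level (\<sigma> ! k) = m" for m i k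
    using that
  proof (induction m arbitrary: i k rule: less_induct)
    case (less m)
    show ?case
    proof (rule ccontr)
      assume far: "\<not> level (\<sigma> ! i) \<le> m"
      then have "0 < i"
        using dist_self[OF root_in_vertices] by (cases i) auto
      have "\<sigma> ! k \<noteq> \<sigma> ! 0"
        using nth_eq_iff[of k 0] less.prems length_pos by auto
      then obtain y where y: "E y (\<sigma> ! k)" "level y + 1 = m"
        using dist_predecessor[OF root_in_vertices nth_in_vertices[OF less.prems(2)]] less.prems(3)
        by metis
      obtain q where q: "q < length \<sigma>" "\<sigma> ! q = y"
        using vertex_index edge_vertices(1)[OF y(1)] by blast
      have below_y: "\<forall>j<q. level (\<sigma> ! j) \<le> level (\<sigma> ! q)"
        using less.IH[of "level y"] y q by auto
      have "q \<noteq> k"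
        using y q edge_irrefl by auto
      then consider "k < q" | "q < k"
        by linarith
      then show False
      proof cases
        case 1
        then show False
          using below_y[rule_format, of i] less.prems(1) far y(2) q(2) by simp
      next
        case 2
        then show False
          using level_le_earlier_nb[OF \<open>0 < i\<close> less.prems(1,2) 2 _ below_y] y q far by simp
      qed
    qed
  qed
  show ?thesis
    using strict[of i k] assms by (cases "i = k") auto
qed

lemma rightmost_left_nb_exists:
  assumes "0 < k" "k < length \<sigma>"
  obtains j where "j < k" "rightmost_left_nb \<sigma> E (\<sigma> ! k) (\<sigma> ! j)"
proof -
  let ?L = "label \<sigma> E k (\<sigma> ! k)"
  let ?j = "Max ?L"
  have "?j \<in> ?L"
    using label_nonempty[OF assms] by simp
  then have j: "?j < k" "E (\<sigma> ! ?j) (\<sigma> ! k)"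
    unfolding label_def by auto
  have "w = \<sigma> ! ?j \<or> precedes \<sigma> w (\<sigma> ! ?j)"
    if w: "E w (\<sigma> ! k)" "precedes \<sigma> w (\<sigma> ! k)" for w
  proof -
    obtain i where i: "i < k" "\<sigma> ! i = w"
      using w(2) assms(2) nth_eq_iff by (metis precedesE)
    then have "i \<le> ?j"
      using w(1) by (simp add: label_def)
    then show ?thesis
      using i j assms(2) precedes_nth_iff by (cases "i = ?j") auto
  qed
  then have "rightmost_left_nb \<sigma> E (\<sigma> ! k) (\<sigma> ! ?j)"
    unfolding rightmost_left_nb_def using j assms(2) by (auto simp: precedes_nth_iff)
  then show thesis
    using that j(1) by blast
qed

lemma rightmost_left_nb_unique:
  "rightmost_left_nb \<sigma> E x w \<Longrightarrow> rightmost_left_nb \<sigma> E x w' \<Longrightarrow> w = w'"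
  unfolding rightmost_left_nb_def using precedes_asym by blast

lemma rightmost_left_nb_level:
  assumes "bipartite V E" "rightmost_left_nb \<sigma> E x w"
  shows "level w + 1 = level x"
proof -
  have edge: "E w x" and "precedes \<sigma> w x"
    using assms(2) unfolding rightmost_left_nb_def by auto
  obtain i j where "i < j" "j < length \<sigma>" "\<sigma> ! i = w" "\<sigma> ! j = x"
    using \<open>precedes \<sigma> w x\<close> by (rule precedesE)
  then have "level w \<le> level x"
    using level_mono[of i j] by simp
  moreover have "level x \<le> level w + 1"
    using dist_edge[OF root_in_vertices edge] .
  moreover have "level w \<noteq> level x"
    using bipartite_dist_edge_ne[OF assms(1) root_in_vertices edge] .
  ultimately show ?thesis
    by simp
qed

section \<open>L-branch leaves\<close>

lemma L_tree_edges_at: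
  assumes "rightmost_left_nb \<sigma> E v u" "v \<in> set \<sigma>" "v \<noteq> hd \<sigma>"
  shows "{e \<in> L_tree_edges \<sigma> E. v \<in> e} = insert {u, v} ((\<lambda>w. {v, w}) ` {w. rightmost_left_nb \<sigma> E w v})"
proof (intro equalityI subsetI)
  fix e assume "e \<in> {e \<in> L_tree_edges \<sigma> E. v \<in> e}"
  then obtain x y where e: "e = {y, x}" "v \<in> e" "rightmost_left_nb \<sigma> E x y"
    unfolding L_tree_edges_def by blast
  then show "e \<in> insert {u, v} ((\<lambda>w. {v, w}) ` {w. rightmost_left_nb \<sigma> E w v})"
    using rightmost_left_nb_unique[OF assms(1)] by (cases "x = v") auto
next
  fix e assume "e \<in> insert {u, v} ((\<lambda>w. {v, w}) ` {w. rightmost_left_nb \<sigma> E w v})"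
  moreover have "{u, v} \<in> L_tree_edges \<sigma> E"
    unfolding L_tree_edges_def using assms by blast
  moreover have "{v, w} \<in> L_tree_edges \<sigma> E" if "rightmost_left_nb \<sigma> E w v" for w
  proof -
    have "w \<in> set \<sigma>" "w \<noteq> hd \<sigma>"
      using that precedes_not_hd[of v w] unfolding rightmost_left_nb_def by auto
    then show ?thesis
      unfolding L_tree_edges_def using that by blast
  qed
  ultimately show "e \<in> {e \<in> L_tree_edges \<sigma> E. v \<in> e}"
    by blast
qed

lemma L_branch_leaf_iff_no_child:
  assumes "v \<in> V" "v \<noteq> hd \<sigma>"
  shows "L_branch_leaf \<sigma> E v \<longleftrightarrow> (\<forall>w. \<not> rightmost_left_nb \<sigma> E w v)"
proof -
  obtain k where k: "k < length \<sigma>" "\<sigma> ! k = v"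
    using vertex_index assms(1) by blast
  then have "0 < k"
    using assms(2) hd_order by (cases k) auto
  then obtain u where u: "rightmost_left_nb \<sigma> E v u"
    using rightmost_left_nb_exists k by metis
  define C where "C = (\<lambda>w. {v, w}) ` {w. rightmost_left_nb \<sigma> E w v}"
  have "v \<in> set \<sigma>"
    using assms(1) set_order by simp
  have "{u, v} \<notin> C"
  proof
    assume "{u, v} \<in> C"
    then obtain w where w: "{u, v} = {v, w}" "rightmost_left_nb \<sigma> E w v"
      unfolding C_def by blast
    have "u \<noteq> v"
      using u edge_irrefl unfolding rightmost_left_nb_def by blast
    then have "w = u"
      using w(1) by (auto simp: doubleton_eq_iff)
    then show False
      using u w(2) precedes_asym unfolding rightmost_left_nb_def by blast
  qed
  moreover have "finite C"
  proof -
    have "{w. rightmost_left_nb \<sigma> E w v} \<subseteq> set \<sigma>"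
      using precedes_not_hd unfolding rightmost_left_nb_def by blast
    then show ?thesis
      unfolding C_def by (simp add: finite_subset)
  qed
  ultimately have "card {e \<in> L_tree_edges \<sigma> E. v \<in> e} = Suc (card C)"
    unfolding L_tree_edges_at[OF u \<open>v \<in> set \<sigma>\<close> assms(2)] C_def[symmetric] by simp
  then have "L_branch_leaf \<sigma> E v \<longleftrightarrow> C = {}"
    unfolding L_branch_leaf_def using \<open>v \<in> set \<sigma>\<close> assms(2) \<open>finite C\<close> by simp
  then show ?thesis
    unfolding C_def by blast
qed

lemma shortest_walk_from_root_avoiding_childless:
  assumes "bipartite V E" "v \<noteq> \<sigma> ! 0" "\<forall>w. \<not> rightmost_left_nb \<sigma> E w v" "x \<in> V - {v}"
  shows "\<exists>p. walk V E p \<and> hd p = \<sigma> ! 0 \<and> last p = x \<and> v \<notin> set p \<and> length p = Suc (level x)"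
  using assms(4)
proof (induction "level x" arbitrary: x)
  case 0
  then have "x = \<sigma> ! 0"
    using dist_eq_0_iff root_in_vertices by auto
  then show ?case
    using root_in_vertices assms(2) dist_self by (intro exI[of _ "[x]"]) (auto simp: walk_singleton)
next
  case (Suc n)
  obtain k where k: "k < length \<sigma>" "\<sigma> ! k = x"
    using vertex_index Suc.prems by blast
  have "0 < k"
    using k Suc.hyps dist_self root_in_vertices by (cases k) auto
  then obtain j where "j < k" and parent: "rightmost_left_nb \<sigma> E x (\<sigma> ! j)"
    using rightmost_left_nb_exists k by metis
  have "\<sigma> ! j \<in> V - {v}"
    using assms(3) parent \<open>j < k\<close> k(1) nth_in_vertices by auto
  moreover have "n = level (\<sigma> ! j)"
    using rightmost_left_nb_level[OF assms(1) parent] Suc.hyps by simp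
  ultimately obtain p where p: "walk V E p" "hd p = \<sigma> ! 0" "last p = \<sigma> ! j" "v \<notin> set p"
    "length p = Suc n"
    using Suc.hyps(1) by blast
  have "walk V E (p @ [x])"
    using p(1,3) parent Suc.prems by (intro walk_snoc) (auto simp: rightmost_left_nb_def)
  moreover have "hd (p @ [x]) = \<sigma> ! 0"
    using p(2,5) by (cases p) auto
  ultimately show ?case
    using p Suc.prems Suc.hyps(2) by (intro exI[of _ "p @ [x]"]) auto
qed

lemma L_branch_leaf_del_vertex_gdist_from_root:
  assumes "bipartite V E" "L_branch_leaf \<sigma> E v" "w \<in> V - {v}"
  shows "gdist V E (hd \<sigma>) w = gdist (fst (del_vertex V E v)) (snd (del_vertex V E v)) (hd \<sigma>) w"
proof -
  have "v \<in> V" "v \<noteq> \<sigma> ! 0"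
    using assms(2) set_order hd_order unfolding L_branch_leaf_def by auto
  then have "\<forall>x. \<not> rightmost_left_nb \<sigma> E x v"
    using L_branch_leaf_iff_no_child assms(2) hd_order by auto
  then have "\<exists>p. walk V E p \<and> hd p = \<sigma> ! 0 \<and> last p = w \<and> v \<notin> set p \<and> length p = Suc (level w)"
    by (rule shortest_walk_from_root_avoiding_childless[OF assms(1) \<open>v \<noteq> \<sigma> ! 0\<close> _ assms(3)])
  then obtain p where "walk V E p" "hd p = \<sigma> ! 0" "last p = w" "v \<notin> set p" "length p = Suc (level w)"
    by blast
  then show ?thesis
    using gdist_del_vertex_eq_if_shortest_walk_avoids hd_order by simp
qed

lemma first_beyond_level_earlier_nbs:
  assumes before: "\<forall>i<t. level (\<sigma> ! i) \<le> j" and beyond: "Suc j \<le> level (\<sigma> ! t)"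
    and first: "\<forall>i<s. level (\<sigma> ! i) < j" and "a \<in> label \<sigma> E t (\<sigma> ! t)"
  shows "s \<le> a" "level (\<sigma> ! t) = Suc j"
proof -
  have "a < t" "level (\<sigma> ! t) \<le> level (\<sigma> ! a) + 1"
    using assms(4) dist_edge[OF root_in_vertices] unfolding label_def by auto
  then have "j \<le> level (\<sigma> ! a)" "level (\<sigma> ! t) \<le> Suc j"
    using before beyond by auto
  then show "level (\<sigma> ! t) = Suc j"
    using beyond by simp
  show "s \<le> a"
    using first \<open>j \<le> level (\<sigma> ! a)\<close> by (cases "a < s") auto
qed

lemma shortest_walk_vertices_first_on_level:
  assumes p: "walk V E p" "hd p = \<sigma> ! 0" "length p = Suc (level (last p))"
    and prefers: "\<And>i x. 0 < i \<Longrightarrow> i < length \<sigma> \<Longrightarrow> \<sigma> ! i \<notin> set p \<Longrightarrow> x \<in> set p \<Longrightarrow>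
      x \<in> V - set (take i \<sigma>) \<Longrightarrow> label_less (label \<sigma> E i x) (label \<sigma> E i (\<sigma> ! i))"
    and "j < length p"
  shows "\<exists>t < length \<sigma>. \<sigma> ! t = p ! j \<and> (\<forall>i<t. level (\<sigma> ! i) < j)"
  using \<open>j < length p\<close>
proof (induction j)
  case 0
  then show ?case
    using p(2) length_pos by (auto simp: hd_conv_nth)
next
  case (Suc j)
  have level_p: "level (p ! i) = i" if "i < length p" for i
    using shortest_walk_nth_dist[OF p that] .
  obtain s where s: "s < length \<sigma>" "\<sigma> ! s = p ! j" "\<forall>i<s. level (\<sigma> ! i) < j"
    using Suc by auto
  have edge: "E (p ! j) (p ! Suc j)"
    using p(1) Suc.prems unfolding walk_def by blast
  obtain y where y: "y < length \<sigma>" "\<sigma> ! y = p ! Suc j"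
    using vertex_index edge_vertices(2)[OF edge] by blast
  have "\<not> Suc j \<le> level (\<sigma> ! 0)"
    using dist_self[OF root_in_vertices] by simp
  then obtain t where t: "t \<le> y" "\<forall>i<t. level (\<sigma> ! i) \<le> j" "Suc j \<le> level (\<sigma> ! t)"
    using ex_least_nat_le[of "\<lambda>i. Suc j \<le> level (\<sigma> ! i)" y] y level_p Suc.prems
    by (auto simp: not_le less_Suc_eq_le)
  have "s < t"
    using level_mono[of t s] t(3) s level_p Suc.prems by fastforce
  \<comment> \<open>every earlier neighbour of \<sigma> ! t sits at position s or later, while p ! Suc j is
     adjacent to \<sigma> ! s; so the tie-breaking in favour of p applies at step t\<close>
  have "\<sigma> ! t \<in> set p"
  proof (rule preferred_choice)
    show "\<sigma> ! t \<notin> set p \<Longrightarrow> x \<in> set p \<Longrightarrow> x \<in> V - set (take t \<sigma>) \<Longrightarrow>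
      label_less (label \<sigma> E t x) (label \<sigma> E t (\<sigma> ! t))" for x
      using prefers[of t x] \<open>s < t\<close> t(1) y(1) by simp
    show "s < t" "E (\<sigma> ! s) (p ! Suc j)" "p ! Suc j \<in> set p"
      using \<open>s < t\<close> s(2) edge Suc.prems by simp_all
    have "\<sigma> ! y \<in> V - set (take t \<sigma>)"
      using nth_in_take_iff[OF y(1)] nth_in_vertices[OF y(1)] t(1) by auto
    then show "p ! Suc j \<in> V - set (take t \<sigma>)"
      using y(2) by simp
    show "\<forall>a \<in> label \<sigma> E t (\<sigma> ! t). s \<le> a"
      using first_beyond_level_earlier_nbs(1)[OF t(2,3) s(3)] by blast
  qed
  then obtain i where i: "i < length p" "\<sigma> ! t = p ! i"
    by (auto simp: in_set_conv_nth)
  obtain a where "a \<in> label \<sigma> E t (\<sigma> ! t)"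
    using label_nonempty \<open>s < t\<close> t(1) y(1) by fastforce
  then have "i = Suc j"
    using first_beyond_level_earlier_nbs(2)[OF t(2,3) s(3)] level_p[OF i(1)] i(2) by simp
  then show ?case
    using t y(1) i(2) by (auto intro!: exI[of _ t] le_imp_less_Suc)
qed

lemma L_branch_leaf_if_first_on_level:
  assumes "bipartite V E"
    and v: "t < length \<sigma>" "\<sigma> ! t = v" "0 < t" "\<forall>i<t. level (\<sigma> ! i) < level v"
    and preserved: "\<forall>w \<in> V - {v}.
      gdist V E (\<sigma> ! 0) w = gdist (fst (del_vertex V E v)) (snd (del_vertex V E v)) (\<sigma> ! 0) w"
  shows "L_branch_leaf \<sigma> E v"
proof -
  have "\<not> rightmost_left_nb \<sigma> E x v" for x
  proof
    assume child: "rightmost_left_nb \<sigma> E x v"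
    then obtain q where q: "q < length \<sigma>" "\<sigma> ! q = x"
      unfolding rightmost_left_nb_def by (metis precedesE)
    have level_x: "level x = Suc (level v)"
      using rightmost_left_nb_level[OF assms(1) child] by simp
    then have "x \<in> V" "x \<noteq> v" "x \<noteq> \<sigma> ! 0"
      using q nth_in_vertices dist_self[OF root_in_vertices] by auto
    then have "gdist V E (\<sigma> ! 0) x = gdist (fst (del_vertex V E v)) (snd (del_vertex V E v)) (\<sigma> ! 0) x"
      using preserved by blast
    then obtain u where u: "E u x" "u \<noteq> v" "level u + 1 = level x"
      by (rule dist_predecessor_avoiding[OF root_in_vertices \<open>x \<in> V\<close> \<open>x \<noteq> \<sigma> ! 0\<close>])
    obtain a where a: "a < length \<sigma>" "\<sigma> ! a = u"
      using vertex_index edge_vertices(1)[OF u(1)] by blast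
    have "\<not> a < t" "a \<noteq> t"
      using v(2,4) a(2) u(2,3) level_x by auto
    moreover have "\<not> q \<le> a"
      using level_mono[of q a] a q u(3) by auto
    ultimately have "precedes \<sigma> (\<sigma> ! a) (\<sigma> ! q)" "\<not> precedes \<sigma> (\<sigma> ! a) (\<sigma> ! t)"
      using a(1) q(1) v(1) precedes_nth_iff by auto
    then show False
      using child u(1,2) a(2) q(2) v(2) unfolding rightmost_left_nb_def by blast
  qed
  moreover have "v \<in> V" "v \<noteq> hd \<sigma>"
    using v nth_in_vertices nth_eq_iff[of t 0] hd_order by auto
  ultimately show ?thesis
    using L_branch_leaf_iff_no_child by blast
qed

end

context finite_connected_graph
begin

lemma L_branch_leaf_exists_if_del_vertex_gdist:
  assumes "bipartite V E" "r \<in> V - {v}" "v \<in> V"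
    and preserved: "\<forall>w \<in> V - {v}.
      gdist V E r w = gdist (fst (del_vertex V E v)) (snd (del_vertex V E v)) r w"
  shows "\<exists>\<sigma>. bfs_ordering V E \<sigma> \<and> L_branch_leaf \<sigma> E v"
proof -
  have "r \<in> V"
    using assms(2) by simp
  obtain p where p: "walk V E p" "hd p = r" "last p = v" "length p = Suc (d r v)"
    by (rule shortest_walk_exists[OF \<open>r \<in> V\<close> assms(3)])
  obtain \<sigma> where \<sigma>: "bfs_ordering V E \<sigma>" "\<sigma> ! 0 = r"
    and prefers: "\<And>i x. 0 < i \<Longrightarrow> i < length \<sigma> \<Longrightarrow> \<sigma> ! i \<notin> set p \<Longrightarrow> x \<in> set p \<Longrightarrow>
      x \<in> V - set (take i \<sigma>) \<Longrightarrow> label_less (label \<sigma> E i x) (label \<sigma> E i (\<sigma> ! i))"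
    by (rule preferred_bfs_ordering_exists[OF finite_vertices \<open>r \<in> V\<close>, where P = "set p" and E = E])
      (rule that; assumption)
  interpret bfs_ordered_graph V E \<sigma>
    using \<sigma>(1) assms(3) by unfold_locales auto
  have shortest: "hd p = \<sigma> ! 0" "length p = Suc (level (last p))" "d r v < length p"
    using p \<sigma>(2) by auto
  moreover have "p ! d r v = v"
    using p by (auto simp: last_conv_nth walk_def)
  ultimately obtain t where t: "t < length \<sigma>" "\<sigma> ! t = v" "\<forall>i<t. d r (\<sigma> ! i) < d r v"
    using shortest_walk_vertices_first_on_level[OF p(1) shortest(1,2) prefers shortest(3)] \<sigma>(2)
    by auto
  moreover have "0 < t"
    using t(2) \<sigma>(2) assms(2) by (cases t) auto
  ultimately have "L_branch_leaf \<sigma> E v"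
    using L_branch_leaf_if_first_on_level[OF assms(1)] \<sigma>(2) preserved by simp
  then show ?thesis
    using \<sigma>(1) by blast
qed

end

theorem theorem7:
  fixes V :: "'a set" and E :: "'a \<Rightarrow> 'a \<Rightarrow> bool" and v :: 'a
  assumes "graph V E" and "connected_graph V E" and "bipartite V E"
    and "card V \<ge> 2" and "v \<in> V"
  shows "(\<exists>\<sigma>. bfs_ordering V E \<sigma> \<and> L_branch_leaf \<sigma> E v) \<longleftrightarrow>
         (\<exists>r \<in> V - {v}. \<forall>w \<in> V - {v}.
            gdist V E r w = gdist (fst (del_vertex V E v)) (snd (del_vertex V E v)) r w)"
proof -
  interpret finite_connected_graph V E
    using assms(1,2) by unfold_locales
  show ?thesis
  proof
    assume "\<exists>\<sigma>. bfs_ordering V E \<sigma> \<and> L_branch_leaf \<sigma> E v"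
    then obtain \<sigma> where \<sigma>: "bfs_ordering V E \<sigma>" "L_branch_leaf \<sigma> E v"
      by blast
    interpret bfs_ordered_graph V E \<sigma>
      using \<sigma>(1) assms(5) by unfold_locales auto
    have "hd \<sigma> \<in> V - {v}"
      using \<sigma>(2) set_order length_pos unfolding L_branch_leaf_def by (auto simp: hd_conv_nth)
    with L_branch_leaf_del_vertex_gdist_from_root[OF assms(3) \<sigma>(2)]
    show "\<exists>r \<in> V - {v}. \<forall>w \<in> V - {v}.
        gdist V E r w = gdist (fst (del_vertex V E v)) (snd (del_vertex V E v)) r w"
      by blast
  qed (use L_branch_leaf_exists_if_del_vertex_gdist[OF assms(3) _ assms(5)] in blast)
qed

end
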